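(* Let $\theta_1,\ldots,\theta_N\in[0,1)$ be distinct, $z_q=e^{2\pi i\theta_q}$, let $\mathbf{V}$ be the $N\times N$ Vandermonde matrix with these phases, and let $\lambda_1(N)$ be the smallest eigenvalue of $\mathbf{V}^*\mathbf{V}$. For $p=1,\ldots,N$ let $$T_p(z)=\prod_{q\ne p}\frac{z-z_q}{|z_p-z_q|}.$$ Then $$\frac{1}{N^3\max_p\max_{|z|=1}|T_p(z)|^2}\le\lambda_1(N)\le\frac{1}{\max_p\max_{|z|=1}|T_p(z)|^2}.$$ Moreover, if $p_0$ is an index with $\prod_{q\ne p_0}|z_{p_0}-z_q|\le N$ (such an index always exists), then $$\lambda_1(N)\le\frac{N^2}{\max_{|z|=1}\prod_{q\ne p_0}|z-z_q|^2}\le\frac{4N^2}{\max_{|z|=1}\prod_{q=1}^N|z-z_q|^2}.$$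
   Context: The $N\times N$ Vandermonde matrix has entries $V(j,q)=\frac{1}{\sqrt N}e^{2\pi i (j-1)\theta_q}$, $j,q=1,\ldots,N$. *)

theory Defs
  imports "HOL-Analysis.Analysis" "Jordan_Normal_Form.Schur_Decomposition"
begin

text \<open>Vandermonde matrix (0-based indices): V(j,q) = exp(2 pi i j theta_q) / sqrt N,
  j, q = 0..N-1 (row j corresponds to the paper's row j+1).\<close>
definition vandermonde :: "nat \<Rightarrow> (nat \<Rightarrow> real) \<Rightarrow> complex mat" where
  "vandermonde N \<theta> = mat N N (\<lambda>(j, q).
     complex_of_real (1 / sqrt (real N)) * exp (2 * pi * \<i> * of_nat j * complex_of_real (\<theta> q)))"

definition smallest_eigenvalue :: "complex mat \<Rightarrow> real" where
  "smallest_eigenvalue M = Min {x :: real. eigenvalue M (complex_of_real x)}"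

definition node :: "(nat \<Rightarrow> real) \<Rightarrow> nat \<Rightarrow> complex" where
  "node \<theta> q = exp (2 * pi * \<i> * complex_of_real (\<theta> q))"

definition Tpoly :: "nat \<Rightarrow> (nat \<Rightarrow> real) \<Rightarrow> nat \<Rightarrow> complex \<Rightarrow> complex" where
  "Tpoly N \<theta> p z = (\<Prod>q \<in> {..<N} - {p}.
      (z - node \<theta> q) / complex_of_real (cmod (node \<theta> p - node \<theta> q)))"

end

theory Submission
  imports Defs
begin

text \<open>
  Write W = sqrt N * V = (z_q ^ j). By the Rayleigh principle, lam1 = min |V f|^2 / |f|^2; this
  is proved from scratch (a minimiser exists by compactness and is an eigenvector by the
  first-order condition). The inverse of W is the coefficient matrix of the Lagrange basis L_p
  of the nodes, and |L_p| = |T_p|. Let M be the maximum over p and |z| = 1 of |L_p(z)|^2.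
  Lower bound: every coefficient of L_p has squared modulus at most M (discrete Fourier
  inversion at the roots of unity), so Cauchy--Schwarz gives |f|^2 <= N^2 M |W f|^2.
  Upper bound: the vector W^-1 c, where c is the conjugated coefficient vector of a maximal
  L_p, has Rayleigh quotient at most 1/M. Comparing leading coefficients in the interpolation
  of x^(N-1) yields a node p with prod_(q ~= p) |z_p - z_q| <= N; for it the product over the
  other nodes is at most N |L_p|, which gives the remaining bounds.
\<close>

section \<open>Rayleigh quotient characterisation of the smallest eigenvalue of a Gram matrix\<close>

definition vec_norm2 :: "nat \<Rightarrow> (nat \<Rightarrow> complex) \<Rightarrow> real" where
  "vec_norm2 n f = (\<Sum>q<n. (cmod (f q))\<^sup>2)"

text \<open>Squared norm of the image of that vector under an \<open>n \<times> n\<close> matrix \<open>V\<close>, i.e.\ the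
  quadratic form of the Gram matrix \<open>V\<^sup>* V\<close>.\<close>
definition image_norm2 :: "complex mat \<Rightarrow> nat \<Rightarrow> (nat \<Rightarrow> complex) \<Rightarrow> real" where
  "image_norm2 V n f = (\<Sum>j<n. (cmod (\<Sum>q<n. V $$ (j, q) * f q))\<^sup>2)"

lemma vec_norm2_nonneg: "0 \<le> vec_norm2 n f"
  by (simp add: vec_norm2_def sum_nonneg)

lemma image_norm2_nonneg: "0 \<le> image_norm2 V n f"
  by (simp add: image_norm2_def sum_nonneg)

lemma vec_norm2_ge_coord: "q < n \<Longrightarrow> (cmod (f q))\<^sup>2 \<le> vec_norm2 n f"
  unfolding vec_norm2_def by (rule member_le_sum) auto

lemma vec_norm2_pos_iff: "0 < vec_norm2 n f \<longleftrightarrow> (\<exists>q<n. f q \<noteq> 0)"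
proof -
  have "vec_norm2 n f = 0 \<longleftrightarrow> (\<forall>q<n. f q = 0)"
    by (auto simp: vec_norm2_def sum_nonneg_eq_0_iff)
  then show ?thesis
    using vec_norm2_nonneg[of n f] by (auto simp: less_le)
qed

lemma mat_adjoint_carrier: "V \<in> carrier_mat n n \<Longrightarrow> mat_adjoint V \<in> carrier_mat n n"
  unfolding mat_adjoint_def by auto

lemma mat_adjoint_index:
  "V \<in> carrier_mat n n \<Longrightarrow> i < n \<Longrightarrow> j < n \<Longrightarrow> mat_adjoint V $$ (i, j) = cnj (V $$ (j, i))"
  unfolding mat_adjoint_def by (auto simp: mat_of_rows_def)

lemma gram_form:
  fixes V :: "complex mat"
  assumes V: "V \<in> carrier_mat n n"
  shows "(\<Sum>k<n. cnj (h k) * ((mat_adjoint V * V) *\<^sub>v vec n g) $ k)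
       = (\<Sum>j<n. cnj (\<Sum>q<n. V $$ (j, q) * h q) * (\<Sum>q<n. V $$ (j, q) * g q))"
proof -
  have apply_eq: "((mat_adjoint V * V) *\<^sub>v vec n g) $ k
      = (\<Sum>j<n. cnj (V $$ (j, k)) * (\<Sum>q<n. V $$ (j, q) * g q))" if k: "k < n" for k
  proof -
    have "(mat_adjoint V * V) *\<^sub>v vec n g = mat_adjoint V *\<^sub>v (V *\<^sub>v vec n g)"
      using mat_adjoint_carrier[OF V] V by auto
    also have "\<dots> $ k = (\<Sum>j<n. mat_adjoint V $$ (k, j) * (V *\<^sub>v vec n g) $ j)"
      using mat_adjoint_carrier[OF V] V k by (auto simp: scalar_prod_def lessThan_atLeast0)
    also have "\<dots> = (\<Sum>j<n. cnj (V $$ (j, k)) * (\<Sum>q<n. V $$ (j, q) * g q))"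
      using V k by (intro sum.cong)
        (auto simp: mat_adjoint_index scalar_prod_def lessThan_atLeast0 row_def)
    finally show ?thesis .
  qed
  have "(\<Sum>k<n. cnj (h k) * ((mat_adjoint V * V) *\<^sub>v vec n g) $ k)
      = (\<Sum>k<n. \<Sum>j<n. cnj (V $$ (j, k) * h k) * (\<Sum>q<n. V $$ (j, q) * g q))"
    by (simp add: apply_eq sum_distrib_left mult.assoc mult.left_commute)
  also have "\<dots> = (\<Sum>j<n. \<Sum>k<n. cnj (V $$ (j, k) * h k) * (\<Sum>q<n. V $$ (j, q) * g q))"
    by (rule sum.swap)
  also have "\<dots> = (\<Sum>j<n. cnj (\<Sum>q<n. V $$ (j, q) * h q) * (\<Sum>q<n. V $$ (j, q) * g q))"
    by (simp add: sum_distrib_right)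
  finally show ?thesis .
qed

lemma eigenvalue_rayleigh_quotient:
  fixes V :: "complex mat"
  assumes V: "V \<in> carrier_mat n n" and ev: "eigenvalue (mat_adjoint V * V) (of_real x)"
  shows "\<exists>f. 0 < vec_norm2 n f \<and> x * vec_norm2 n f = image_norm2 V n f"
proof -
  have gram: "mat_adjoint V * V \<in> carrier_mat n n"
    using mat_adjoint_carrier[OF V] V by auto
  obtain v where v: "v \<in> carrier_vec n" "v \<noteq> 0\<^sub>v n" "(mat_adjoint V * V) *\<^sub>v v = of_real x \<cdot>\<^sub>v v"
    using ev gram unfolding eigenvalue_def eigenvector_def by auto
  define f where "f = (\<lambda>q. v $ q)"
  have v_eq: "v = vec n f"
    using v(1) by (auto simp: f_def)
  have "0 < vec_norm2 n f"
    using v(1,2) unfolding vec_norm2_pos_iff by (auto simp: f_def vec_eq_iff)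
  moreover have "of_real (x * vec_norm2 n f) = (of_real (image_norm2 V n f) :: complex)"
  proof -
    have "of_real (x * vec_norm2 n f) = (\<Sum>k<n. cnj (f k) * ((mat_adjoint V * V) *\<^sub>v vec n f) $ k)"
      using v(3) unfolding v_eq[symmetric] using v(1)
      by (simp add: vec_norm2_def complex_norm_square[unfolded of_real_power] sum_distrib_left f_def mult_ac)
    also have "\<dots> = of_real (image_norm2 V n f)"
      unfolding gram_form[OF V] image_norm2_def of_real_sum complex_norm_square
      by (simp add: mult.commute)
    finally show ?thesis .
  qed
  ultimately show ?thesis
    by (intro exI[of _ f]) (simp only: of_real_eq_iff)
qed

lemma quadratic_nonneg_imp_linear_zero:
  fixes a b :: real
  assumes "\<And>t. 0 \<le> 2 * t * a + t\<^sup>2 * b"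
  shows "a = 0"
proof (rule ccontr)
  assume a: "a \<noteq> 0"
  define c where "c = \<bar>b\<bar> + 1"
  have c: "0 < c" "\<bar>b\<bar> < c" by (auto simp: c_def)
  define t where "t = - a / c"
  have "2 * t * a + t\<^sup>2 * b \<le> 2 * t * a + t\<^sup>2 * \<bar>b\<bar>"
    by (simp add: mult_left_mono)
  also have "\<dots> = (a\<^sup>2 / c) * (\<bar>b\<bar> / c - 2)"
    using c by (simp add: t_def field_simps power2_eq_square)
  also have "\<dots> < 0"
    using a c by (intro mult_pos_neg) (auto simp: field_simps)
  finally show False using assms[of t] by simp
qed

lemma cmod_add_real_mult_sq:
  "(cmod (a + of_real t * b))\<^sup>2 = (cmod a)\<^sup>2 + 2 * t * Re (cnj a * b) + t\<^sup>2 * (cmod b)\<^sup>2"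
  by (simp only: cmod_power2) (simp add: power2_eq_square algebra_simps)

lemma vec_norm2_line:
  "vec_norm2 n (\<lambda>q. f q + of_real t * h q)
     = vec_norm2 n f + 2 * t * Re (\<Sum>q<n. cnj (f q) * h q) + t\<^sup>2 * vec_norm2 n h"
  unfolding vec_norm2_def
  by (simp add: cmod_add_real_mult_sq sum.distrib sum_distrib_left Re_sum distrib_left)

lemma image_norm2_line:
  "image_norm2 V n (\<lambda>q. f q + of_real t * h q)
     = image_norm2 V n f
       + 2 * t * Re (\<Sum>j<n. cnj (\<Sum>q<n. V $$ (j, q) * f q) * (\<Sum>q<n. V $$ (j, q) * h q))
       + t\<^sup>2 * image_norm2 V n h"
proof -
  have inner: "(\<Sum>q<n. V $$ (j, q) * (f q + of_real t * h q))
      = (\<Sum>q<n. V $$ (j, q) * f q) + of_real t * (\<Sum>q<n. V $$ (j, q) * h q)" for j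
    by (simp add: algebra_simps sum.distrib sum_distrib_left)
  show ?thesis
    unfolding image_norm2_def inner cmod_add_real_mult_sq sum.distrib Re_sum
    by (simp only: sum_distrib_left mult.assoc)
qed

lemma vec_norm2_cong: "(\<And>q. q < n \<Longrightarrow> f q = g q) \<Longrightarrow> vec_norm2 n f = vec_norm2 n g"
  unfolding vec_norm2_def by simp

lemma image_norm2_cong: "(\<And>q. q < n \<Longrightarrow> f q = g q) \<Longrightarrow> image_norm2 V n f = image_norm2 V n g"
  unfolding image_norm2_def by simp

lemma vec_norm2_divide: "vec_norm2 n (\<lambda>q. f q / of_real s) = vec_norm2 n f / s\<^sup>2"
  unfolding vec_norm2_def by (simp add: sum_divide_distrib norm_divide power_divide)

lemma image_norm2_divide: "image_norm2 V n (\<lambda>q. f q / of_real s) = image_norm2 V n f / s\<^sup>2"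
proof -
  have inner: "(\<Sum>q<n. V $$ (j, q) * (f q / of_real s)) = (\<Sum>q<n. V $$ (j, q) * f q) / of_real s" for j
    by (simp add: sum_divide_distrib)
  show ?thesis
    unfolding image_norm2_def inner norm_divide power_divide by (simp add: sum_divide_distrib)
qed

text \<open>By compactness, \<open>\<parallel>V f\<parallel>\<^sup>2\<close> attains its minimum on the unit sphere.\<close>
lemma unit_sphere_minimizer:
  assumes n: "0 < n"
  shows "\<exists>f0. vec_norm2 n f0 = 1 \<and>
           (\<forall>f. vec_norm2 n f = 1 \<longrightarrow> image_norm2 V n f0 \<le> image_norm2 V n f)"
proof -
  define K where "K = (\<lambda>i. if i < n then cball (0::complex) 1 else {0})"
  define S where "S = PiE UNIV K \<inter> {f. vec_norm2 n f = 1}"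
  have coord: "continuous_on UNIV (\<lambda>f::nat \<Rightarrow> complex. f q)" for q
    by simp
  have "compactin (product_topology (\<lambda>i. euclidean) UNIV) (PiE UNIV K)"
    by (subst compactin_PiE) (auto simp: K_def)
  then have "compact (PiE UNIV K)"
    by (simp add: euclidean_product_topology)
  moreover have "closed {f. vec_norm2 n f = 1}"
    unfolding vec_norm2_def by (intro closed_Collect_eq continuous_intros coord)
  ultimately have S_compact: "compact S"
    unfolding S_def by (rule compact_Int_closed)
  define e0 where "e0 = (\<lambda>i::nat. if i = 0 then (1::complex) else 0)"
  have "vec_norm2 n e0 = (\<Sum>q<n. if q = 0 then 1 else 0)"
    unfolding vec_norm2_def e0_def by (intro sum.cong) auto
  also have "\<dots> = 1"
    using n by simp
  finally have "e0 \<in> S"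
    using n by (auto simp: S_def e0_def K_def PiE_iff)
  moreover have "continuous_on S (image_norm2 V n)"
    unfolding image_norm2_def by (intro continuous_intros continuous_on_subset[OF coord]) auto
  ultimately obtain f0 where f0: "f0 \<in> S" and f0_min: "\<And>f. f \<in> S \<Longrightarrow> image_norm2 V n f0 \<le> image_norm2 V n f"
    using continuous_attains_inf[OF S_compact] by blast
  have "image_norm2 V n f0 \<le> image_norm2 V n f" if f: "vec_norm2 n f = 1" for f
  proof -
    define g where "g = (\<lambda>i. if i < n then f i else 0)"
    have "vec_norm2 n g = 1"
      using f vec_norm2_cong[of n g f] by (simp add: g_def)
    have "image_norm2 V n g = image_norm2 V n f"
      by (rule image_norm2_cong) (simp add: g_def)
    moreover have "cmod (f i) \<le> 1" if "i < n" for i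
      using vec_norm2_ge_coord[OF that, of f] f by (simp add: power_le_one_iff abs_le_square_iff)
    ultimately have "g \<in> S"
      using \<open>vec_norm2 n g = 1\<close> by (auto simp: S_def K_def g_def PiE_iff)
    then show ?thesis
      using f0_min \<open>image_norm2 V n g = image_norm2 V n f\<close> by metis
  qed
  moreover have "vec_norm2 n f0 = 1"
    using f0 by (simp add: S_def)
  ultimately show ?thesis by blast
qed

lemma rayleigh_minimizer:
  assumes n: "0 < n"
  shows "\<exists>f0. vec_norm2 n f0 = 1 \<and>
           (\<forall>g. image_norm2 V n f0 * vec_norm2 n g \<le> image_norm2 V n g)"
proof -
  obtain f0 where f0: "vec_norm2 n f0 = 1"
    and min: "\<And>f. vec_norm2 n f = 1 \<Longrightarrow> image_norm2 V n f0 \<le> image_norm2 V n f"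
    using unit_sphere_minimizer[OF n] by blast
  have "image_norm2 V n f0 * vec_norm2 n g \<le> image_norm2 V n g" for g
  proof (cases "vec_norm2 n g = 0")
    case True
    then show ?thesis by (simp add: image_norm2_nonneg)
  next
    case False
    define s where "s = sqrt (vec_norm2 n g)"
    have s: "0 < s" "s\<^sup>2 = vec_norm2 n g"
      using False vec_norm2_nonneg[of n g] by (auto simp: s_def)
    have "vec_norm2 n (\<lambda>q. g q / of_real s) = 1"
      unfolding vec_norm2_divide s(2)[symmetric] using s(1) by simp
    then have "image_norm2 V n f0 \<le> image_norm2 V n (\<lambda>q. g q / of_real s)"
      by (rule min)
    then show ?thesis
      using s(1) unfolding image_norm2_divide s(2)[symmetric] by (simp add: field_simps)
  qed
  with f0 show ?thesis by blast
qed

text \<open>First-order optimality: a minimiser of the Rayleigh quotient is an eigenvector of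
  \<open>V\<^sup>* V\<close>, with the minimal value as eigenvalue.\<close>
lemma rayleigh_minimizer_eigenvalue:
  fixes V :: "complex mat"
  assumes V: "V \<in> carrier_mat n n" and f0: "vec_norm2 n f0 = 1"
    and min: "\<And>g. image_norm2 V n f0 * vec_norm2 n g \<le> image_norm2 V n g"
  shows "eigenvalue (mat_adjoint V * V) (of_real (image_norm2 V n f0))"
proof -
  define \<mu> where "\<mu> = image_norm2 V n f0"
  define A where "A = mat_adjoint V * V"
  have A: "A \<in> carrier_mat n n"
    using mat_adjoint_carrier[OF V] V by (auto simp: A_def)
  define v where "v = vec n f0"
  define u where "u = A *\<^sub>v v - of_real \<mu> \<cdot>\<^sub>v v"
  have u_carrier: "u \<in> carrier_vec n"
    using A by (simp add: u_def v_def)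
  have u_index: "u $ k = (A *\<^sub>v v) $ k - of_real \<mu> * f0 k" if "k < n" for k
    using A that by (simp add: u_def v_def)
  text \<open>The derivative of \<open>\<parallel>V g\<parallel>\<^sup>2 - \<mu> \<parallel>g\<parallel>\<^sup>2\<close> at \<open>f0\<close> in every direction \<open>h\<close> vanishes.\<close>
  have first_variation: "Re (\<Sum>k<n. cnj (h k) * u $ k) = 0" for h
  proof -
    define X where "X = Re (\<Sum>j<n. cnj (\<Sum>q<n. V $$ (j, q) * f0 q) * (\<Sum>q<n. V $$ (j, q) * h q))
                        - \<mu> * Re (\<Sum>q<n. cnj (f0 q) * h q)"
    have "0 \<le> 2 * t * X + t\<^sup>2 * (image_norm2 V n h - \<mu> * vec_norm2 n h)" for t
      using min[of "\<lambda>q. f0 q + of_real t * h q"]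
      unfolding vec_norm2_line image_norm2_line f0 \<mu>_def[symmetric] X_def
      by (simp add: algebra_simps)
    then have "X = 0"
      by (rule quadratic_nonneg_imp_linear_zero)
    moreover have "Re (\<Sum>k<n. cnj (h k) * u $ k) = X"
    proof -
      have "Re (\<Sum>k<n. cnj (h k) * (A *\<^sub>v v) $ k)
          = Re (\<Sum>j<n. cnj (\<Sum>q<n. V $$ (j, q) * f0 q) * (\<Sum>q<n. V $$ (j, q) * h q))"
        unfolding A_def v_def gram_form[OF V]
        by (subst cnj.sel(1)[symmetric]) (simp add: mult.commute)
      moreover have "Re (\<Sum>k<n. cnj (h k) * (of_real \<mu> * f0 k)) = \<mu> * Re (\<Sum>q<n. cnj (f0 q) * h q)"
        by (subst cnj.sel(1)[symmetric]) (simp add: Re_sum sum_distrib_left sum.distrib mult_ac distrib_left)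
      ultimately show ?thesis
        unfolding X_def by (simp add: u_index right_diff_distrib sum_subtractf)
    qed
    ultimately show ?thesis by simp
  qed
  have "vec_norm2 n (\<lambda>k. u $ k) = 0"
    using first_variation[of "\<lambda>k. u $ k"]
    by (simp add: vec_norm2_def complex_norm_square[unfolded of_real_power, symmetric] mult.commute)
  then have "u = 0\<^sub>v n"
    using u_carrier vec_norm2_pos_iff[of n "\<lambda>k. u $ k"] vec_norm2_nonneg[of n "\<lambda>k. u $ k"]
    by (auto simp: vec_eq_iff)
  then have "A *\<^sub>v v = of_real \<mu> \<cdot>\<^sub>v v"
    using A by (auto simp: u_def v_def vec_eq_iff)
  moreover have "v \<noteq> 0\<^sub>v n"
    using f0 vec_norm2_pos_iff[of n f0] by (auto simp: v_def vec_eq_iff)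
  ultimately show ?thesis
    using A unfolding eigenvalue_def eigenvector_def A_def[symmetric] \<mu>_def[symmetric]
    by (intro exI[of _ v]) (auto simp: v_def)
qed

lemma finite_real_eigenvalues:
  fixes A :: "complex mat"
  assumes A: "A \<in> carrier_mat n n"
  shows "finite {x :: real. eigenvalue A (of_real x)}"
proof -
  have "char_poly A \<noteq> 0"
    using degree_monic_char_poly[OF A] by auto
  moreover have "{x :: real. eigenvalue A (of_real x)} = of_real -` {k. poly (char_poly A) k = 0}"
    by (auto simp: eigenvalue_root_char_poly[OF A])
  ultimately show ?thesis
    by (metis finite_vimageI inj_of_real poly_roots_finite)
qed

theorem smallest_eigenvalue_rayleigh:
  fixes V :: "complex mat"
  assumes V: "V \<in> carrier_mat n n" and n: "0 < n"
  defines "lam \<equiv> smallest_eigenvalue (mat_adjoint V * V)"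
  shows "\<And>f. lam * vec_norm2 n f \<le> image_norm2 V n f"
    and "\<exists>f. 0 < vec_norm2 n f \<and> lam * vec_norm2 n f = image_norm2 V n f"
proof -
  obtain f0 where f0: "vec_norm2 n f0 = 1"
    and min: "\<And>g. image_norm2 V n f0 * vec_norm2 n g \<le> image_norm2 V n g"
    using rayleigh_minimizer[OF n] by blast
  define E where "E = {x :: real. eigenvalue (mat_adjoint V * V) (of_real x)}"
  have "image_norm2 V n f0 \<in> E"
    using rayleigh_minimizer_eigenvalue[OF V f0 min] by (simp add: E_def)
  moreover have "image_norm2 V n f0 \<le> x" if "x \<in> E" for x
  proof -
    obtain f where f: "0 < vec_norm2 n f" "x * vec_norm2 n f = image_norm2 V n f"
      using eigenvalue_rayleigh_quotient[OF V] \<open>x \<in> E\<close> unfolding E_def by blast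
    then have "image_norm2 V n f0 * vec_norm2 n f \<le> x * vec_norm2 n f"
      using min[of f] by simp
    then show ?thesis
      using f(1) by (rule mult_right_le_imp_le)
  qed
  moreover have "finite E"
    unfolding E_def using mat_adjoint_carrier[OF V] V by (intro finite_real_eigenvalues) auto
  ultimately have lam_eq: "lam = image_norm2 V n f0"
    unfolding lam_def smallest_eigenvalue_def E_def[symmetric] by (intro Min_eqI) auto
  show "lam * vec_norm2 n f \<le> image_norm2 V n f" for f
    using min lam_eq by simp
  show "\<exists>f. 0 < vec_norm2 n f \<and> lam * vec_norm2 n f = image_norm2 V n f"
    using f0 lam_eq by (intro exI[of _ f0]) simp
qed

section \<open>Coefficients of a polynomial and its maximum on the unit circle\<close>

lemma poly_as_sum:
  fixes P :: "complex poly"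
  assumes "degree P < N"
  shows "poly P x = (\<Sum>j<N. coeff P j * x ^ j)"
proof -
  have "poly P x = (\<Sum>j\<le>degree P. coeff P j * x ^ j)"
    by (rule poly_altdef)
  also have "\<dots> = (\<Sum>j<N. coeff P j * x ^ j)"
    using assms by (intro sum.mono_neutral_left) (auto simp: coeff_eq_0)
  finally show ?thesis .
qed

definition unit_root :: "nat \<Rightarrow> complex" where
  "unit_root N = exp (2 * of_real pi * \<i> / of_nat N)"

lemma unit_root_power: "unit_root N ^ j = exp (2 * of_real pi * \<i> * of_nat j / of_nat N)"
  unfolding unit_root_def exp_of_nat_mult[symmetric] by (simp add: mult_ac)

lemma norm_unit_root [simp]: "cmod (unit_root N) = 1"
  by (simp add: unit_root_def)

lemma cnj_eq_inverse: "cmod u = 1 \<Longrightarrow> cnj u = inverse u"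
  by (metis complex_div_cnj div_by_1 divide_inverse_commute inverse_eq_divide mult_1 norm_one of_real_1 power_one)

lemma unit_root_orthogonality:
  assumes N: "0 < N" and l: "l < N" and j: "j < N"
  shows "(\<Sum>k<N. (unit_root N ^ k) ^ l * cnj (unit_root N ^ k) ^ j) = (if l = j then of_nat N else 0)"
proof -
  define \<omega> where "\<omega> = unit_root N"
  define r where "r = \<omega> ^ l / \<omega> ^ j"
  have "(\<omega> ^ k) ^ l * cnj (\<omega> ^ k) ^ j = r ^ k" for k
  proof -
    have "cnj (\<omega> ^ k) = inverse (\<omega> ^ k)"
      by (rule cnj_eq_inverse) (simp add: \<omega>_def norm_power)
    moreover have "(\<omega> ^ k) ^ l = (\<omega> ^ l) ^ k" "inverse (\<omega> ^ k) ^ j = inverse (\<omega> ^ j) ^ k"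
      by (metis power_mult mult.commute, metis power_mult mult.commute power_inverse)
    ultimately show ?thesis
      by (simp add: r_def divide_inverse power_mult_distrib)
  qed
  then have sum_eq: "(\<Sum>k<N. (\<omega> ^ k) ^ l * cnj (\<omega> ^ k) ^ j) = (\<Sum>k<N. r ^ k)"
    by simp
  show ?thesis
  proof (cases "l = j")
    case True
    then have "r = 1"
      by (simp add: r_def \<omega>_def power_not_zero unit_root_def)
    then show ?thesis
      using True sum_eq by (simp add: \<omega>_def)
  next
    case False
    have "\<omega> ^ l \<noteq> \<omega> ^ j"
      using False l j N unfolding \<omega>_def unit_root_power by (simp add: complex_root_unity_eq)
    then have "r \<noteq> 1"
      by (simp add: r_def \<omega>_def unit_root_def)
    moreover have "r ^ N = 1"
      using N unfolding r_def \<omega>_def power_divide unit_root_power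
      by (simp add: power_mult[symmetric] mult.commute[of _ N] power_mult complex_root_unity)
    ultimately show ?thesis
      using False sum_eq by (simp add: \<omega>_def sum_gp_strict)
  qed
qed

lemma coeff_from_unit_roots:
  fixes P :: "complex poly"
  assumes deg: "degree P < N" and j: "j < N"
  shows "of_nat N * coeff P j = (\<Sum>k<N. poly P (unit_root N ^ k) * cnj (unit_root N ^ k) ^ j)"
proof -
  have N: "0 < N" using j by simp
  have "(\<Sum>k<N. poly P (unit_root N ^ k) * cnj (unit_root N ^ k) ^ j)
      = (\<Sum>l<N. coeff P l * (\<Sum>k<N. (unit_root N ^ k) ^ l * cnj (unit_root N ^ k) ^ j))"
    unfolding poly_as_sum[OF deg] sum_distrib_right sum_distrib_left
    by (subst sum.swap) (simp add: mult.assoc)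
  also have "\<dots> = (\<Sum>l<N. coeff P l * (if l = j then of_nat N else 0))"
    by (intro sum.cong refl) (simp only: unit_root_orthogonality[OF N _ j] lessThan_iff)
  also have "\<dots> = of_nat N * coeff P j"
    using j by (simp add: if_distrib cong: if_cong)
  finally show ?thesis ..
qed

definition circle_max :: "complex poly \<Rightarrow> real" where
  "circle_max P = (SUP z \<in> {z. cmod z = 1}. (cmod (poly P z))\<^sup>2)"

text \<open>On the unit circle, \<open>|P|\<^sup>2 \<le> N \<Sum> |coeff|\<^sup>2\<close> by Cauchy--Schwarz.\<close>
lemma poly_unit_circle_le_coeffs:
  fixes P :: "complex poly"
  assumes deg: "degree P < N" and z: "cmod z = 1"
  shows "(cmod (poly P z))\<^sup>2 \<le> real N * (\<Sum>j<N. (cmod (coeff P j))\<^sup>2)"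
proof -
  have "cmod (poly P z) \<le> (\<Sum>j<N. cmod (coeff P j * z ^ j))"
    unfolding poly_as_sum[OF deg] by (rule norm_sum)
  also have "\<dots> = (\<Sum>j<N. cmod (coeff P j))"
    using z by (simp add: norm_mult norm_power)
  finally have "cmod (poly P z) \<le> (\<Sum>j<N. cmod (coeff P j))" .
  then have "(cmod (poly P z))\<^sup>2 \<le> (\<Sum>j<N. cmod (coeff P j))\<^sup>2"
    by (intro power_mono) auto
  also have "\<dots> \<le> (\<Sum>j<N. (cmod (coeff P j))\<^sup>2) * card {..<N}"
    by (rule sum_squared_le_sum_of_squares)
  finally show ?thesis
    by (simp add: mult.commute)
qed

lemma bdd_above_unit_circle: "bdd_above ((\<lambda>z. (cmod (poly P z))\<^sup>2) ` {z. cmod z = 1})"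
  using poly_unit_circle_le_coeffs[of P "Suc (degree P)"] by (intro bdd_aboveI2) auto

lemma circle_max_upper: "cmod z = 1 \<Longrightarrow> (cmod (poly P z))\<^sup>2 \<le> circle_max P"
  unfolding circle_max_def by (rule cSUP_upper[OF _ bdd_above_unit_circle]) simp

lemma circle_max_least: "(\<And>z. cmod z = 1 \<Longrightarrow> (cmod (poly P z))\<^sup>2 \<le> B) \<Longrightarrow> circle_max P \<le> B"
  unfolding circle_max_def by (rule cSUP_least) (auto intro: exI[of _ 1])

lemma circle_max_nonneg: "0 \<le> circle_max P"
  using circle_max_upper[of 1 P] by (meson norm_one order.trans zero_le_power2)

text \<open>A nonzero polynomial does not vanish identically on the (infinite) unit circle.\<close>
lemma circle_max_pos:
  assumes "P \<noteq> 0"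
  shows "0 < circle_max P"
proof -
  have connected: "connected (sphere (0::complex) 1)"
    by (rule connected_sphere) simp
  have "1 \<in> sphere (0::complex) 1" "-1 \<in> sphere (0::complex) 1"
    by auto
  then have "infinite (sphere (0::complex) 1)"
    using connected_finite_iff_sing[OF connected] by (metis empty_iff one_neq_neg_one singletonD)
  then have "infinite (sphere (0::complex) 1 - {x. poly P x = 0})"
    using poly_roots_finite[OF assms] by (metis Diff_infinite_finite)
  then obtain x where x: "cmod x = 1" "poly P x \<noteq> 0"
    by (metis (mono_tags, lifting) DiffE finite.emptyI mem_Collect_eq mem_sphere_0 ex_in_conv)
  then show ?thesis
    using circle_max_upper[OF x(1), of P] by (metis less_le_trans zero_less_norm_iff zero_less_power)
qed

lemma circle_max_le_coeffs:
  "degree P < N \<Longrightarrow> circle_max P \<le> real N * (\<Sum>j<N. (cmod (coeff P j))\<^sup>2)"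
  by (intro circle_max_least poly_unit_circle_le_coeffs)

text \<open>Cauchy's coefficient estimate in discrete form: every coefficient is bounded by the
  maximum modulus on the unit circle.\<close>
lemma coeff_le_circle_max: "(cmod (coeff P j))\<^sup>2 \<le> circle_max P"
proof (cases "j \<le> degree P")
  case False
  then show ?thesis
    by (simp add: coeff_eq_0 circle_max_nonneg)
next
  case True
  define N where "N = Suc (degree P)"
  have N: "0 < N" "degree P < N" "j < N"
    using True by (auto simp: N_def)
  have "real N * cmod (coeff P j) = cmod (\<Sum>k<N. poly P (unit_root N ^ k) * cnj (unit_root N ^ k) ^ j)"
    using coeff_from_unit_roots[OF N(2,3)] by (metis norm_mult norm_of_nat)
  also have "\<dots> \<le> (\<Sum>k<N. cmod (poly P (unit_root N ^ k)))"
    by (rule order.trans[OF norm_sum]) (simp add: norm_mult norm_power)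
  also have "\<dots> \<le> (\<Sum>k<N. sqrt (circle_max P))"
    by (intro sum_mono real_le_rsqrt circle_max_upper) (simp add: norm_power)
  finally have "cmod (coeff P j) \<le> sqrt (circle_max P)"
    using N by (simp add: mult_le_cancel_left_pos)
  then show ?thesis
    using circle_max_nonneg[of P] by (metis norm_ge_zero real_sqrt_le_iff real_sqrt_pow2 power_mono)
qed

section \<open>The Lagrange basis of distinct nodes\<close>

definition lagrange_denom :: "(nat \<Rightarrow> complex) \<Rightarrow> nat \<Rightarrow> nat \<Rightarrow> complex" where
  "lagrange_denom z N p = (\<Prod>q \<in> {..<N} - {p}. z p - z q)"

definition lagrange_basis :: "(nat \<Rightarrow> complex) \<Rightarrow> nat \<Rightarrow> nat \<Rightarrow> complex poly" where
  "lagrange_basis z N p =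
     Polynomial.smult (inverse (lagrange_denom z N p)) (\<Prod>q \<in> {..<N} - {p}. [:- z q, 1:])"

lemma poly_lagrange_basis:
  "poly (lagrange_basis z N p) x = (\<Prod>q \<in> {..<N} - {p}. x - z q) / lagrange_denom z N p"
  unfolding lagrange_basis_def by (simp add: poly_prod field_simps)

lemma degree_lagrange_numerator:
  "p < N \<Longrightarrow> degree (\<Prod>q \<in> {..<N} - {p}. [:- z q, 1::complex:]) = N - 1"
  by (subst degree_prod_eq_sum_degree) (auto simp: card_Diff_singleton_if)

lemma degree_lagrange_basis:
  assumes "p < N"
  shows "degree (lagrange_basis z N p) < N"
proof -
  have "degree (lagrange_basis z N p) \<le> N - 1"
    unfolding lagrange_basis_def
    by (rule order.trans[OF degree_smult_le]) (simp add: degree_lagrange_numerator[OF assms])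
  then show ?thesis
    using assms by linarith
qed

lemma coeff_lagrange_basis_top:
  assumes "p < N"
  shows "coeff (lagrange_basis z N p) (N - 1) = inverse (lagrange_denom z N p)"
proof -
  have "lead_coeff (\<Prod>q \<in> {..<N} - {p}. [:- z q, 1::complex:]) = 1"
    by (simp add: lead_coeff_prod)
  then show ?thesis
    using degree_lagrange_numerator[OF assms] by (simp add: lagrange_basis_def)
qed

context
  fixes z :: "nat \<Rightarrow> complex" and N :: nat
  assumes distinct: "inj_on z {..<N}"
begin

lemma lagrange_denom_nonzero: "p < N \<Longrightarrow> lagrange_denom z N p \<noteq> 0"
  using distinct unfolding lagrange_denom_def by (auto dest: inj_onD)

lemma poly_lagrange_basis_node:
  assumes p: "p < N" and q: "q < N"
  shows "poly (lagrange_basis z N p) (z q) = (if q = p then 1 else 0)"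
proof (cases "q = p")
  case True
  then show ?thesis
    using lagrange_denom_nonzero[OF p] by (simp add: poly_lagrange_basis lagrange_denom_def)
next
  case False
  then have "(\<Prod>r \<in> {..<N} - {p}. z q - z r) = 0"
    using q by (intro prod_zero) auto
  then show ?thesis
    using False by (simp add: poly_lagrange_basis)
qed

text \<open>Lagrange interpolation: a polynomial of degree \<open>< N\<close> is the combination of the basis
  polynomials weighted by its values at the nodes, because the difference has \<open>N\<close> roots.\<close>
lemma lagrange_interpolation:
  assumes deg: "degree P < N"
  shows "P = (\<Sum>q<N. Polynomial.smult (poly P (z q)) (lagrange_basis z N q))"
proof -
  define R where "R = P - (\<Sum>q<N. Polynomial.smult (poly P (z q)) (lagrange_basis z N q))"
  have "degree R < N"
    unfolding R_def using deg degree_lagrange_basis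
    by (intro degree_diff_less degree_sum_less) (auto intro: le_less_trans[OF degree_smult_le])
  have roots: "poly R (z r) = 0" if r: "r < N" for r
  proof -
    have "(\<Sum>q<N. poly P (z q) * poly (lagrange_basis z N q) (z r)) = poly P (z r)"
      using r by (simp add: poly_lagrange_basis_node if_distrib cong: if_cong)
    then show ?thesis
      by (simp add: R_def poly_sum)
  qed
  show ?thesis
  proof (rule ccontr)
    assume "P \<noteq> (\<Sum>q<N. Polynomial.smult (poly P (z q)) (lagrange_basis z N q))"
    then have R: "R \<noteq> 0"
      by (simp add: R_def)
    have "N = card (z ` {..<N})"
      using distinct by (simp add: card_image)
    also have "\<dots> \<le> card {x. poly R x = 0}"
      using roots by (intro card_mono poly_roots_finite R) auto
    also have "\<dots> \<le> degree R"
      by (rule poly_roots_degree[OF R])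
    finally show False
      using \<open>degree R < N\<close> by simp
  qed
qed

text \<open>Interpolating the monomial \<open>x\<^sup>j\<close>: the coefficient matrix of the Lagrange basis is the
  inverse of the (unnormalised) Vandermonde matrix \<open>(z q ^ j)\<close>.\<close>
lemma lagrange_coeff_inverse:
  assumes j: "j < N"
  shows "(\<Sum>q<N. z q ^ j * coeff (lagrange_basis z N q) l) = (if j = l then 1 else 0)"
proof -
  have "monom 1 j = (\<Sum>q<N. Polynomial.smult (z q ^ j) (lagrange_basis z N q))"
    using lagrange_interpolation[of "monom 1 j"] j by (simp add: degree_monom_eq poly_monom)
  then have "coeff (monom 1 j) l = (\<Sum>q<N. z q ^ j * coeff (lagrange_basis z N q) l)"
    by (simp add: coeff_sum)
  then show ?thesis
    by (simp add: coeff_monom)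
qed

end

section \<open>Distinct nodes on the unit circle\<close>

text \<open>Squared norm of \<open>W f\<close> for the unnormalised Vandermonde matrix \<open>W = (z q ^ j)\<^sub>j\<^sub>,\<^sub>q\<close>.\<close>
definition moment_norm2 :: "(nat \<Rightarrow> complex) \<Rightarrow> nat \<Rightarrow> (nat \<Rightarrow> complex) \<Rightarrow> real" where
  "moment_norm2 z N f = (\<Sum>j<N. (cmod (\<Sum>q<N. z q ^ j * f q))\<^sup>2)"

definition lagrange_max :: "(nat \<Rightarrow> complex) \<Rightarrow> nat \<Rightarrow> real" where
  "lagrange_max z N = Max ((\<lambda>p. circle_max (lagrange_basis z N p)) ` {..<N})"

lemma cmod_sum_mult_sq_le:
  fixes a b :: "nat \<Rightarrow> complex"
  shows "(cmod (\<Sum>j<N. a j * b j))\<^sup>2 \<le> (\<Sum>j<N. (cmod (a j))\<^sup>2) * (\<Sum>j<N. (cmod (b j))\<^sup>2)"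
proof -
  have "cmod (\<Sum>j<N. a j * b j) \<le> (\<Sum>j<N. cmod (a j) * cmod (b j))"
    by (rule order.trans[OF norm_sum]) (simp add: norm_mult)
  then have "(cmod (\<Sum>j<N. a j * b j))\<^sup>2 \<le> (\<Sum>j<N. cmod (a j) * cmod (b j))\<^sup>2"
    by (intro power_mono) auto
  also have "\<dots> \<le> (\<Sum>j<N. (cmod (a j))\<^sup>2) * (\<Sum>j<N. (cmod (b j))\<^sup>2)"
    by (rule Cauchy_Schwarz_ineq_sum)
  finally show ?thesis .
qed

lemma circle_max_node_product:
  "circle_max (\<Prod>q \<in> A. [:- z q, 1:]) = (SUP x \<in> {x. cmod x = 1}. (\<Prod>q \<in> A. cmod (x - z q))\<^sup>2)"
  unfolding circle_max_def by (simp add: poly_prod prod_norm[symmetric])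

context
  fixes z :: "nat \<Rightarrow> complex" and N :: nat
  assumes distinct: "inj_on z {..<N}" and unit: "\<And>q. q < N \<Longrightarrow> cmod (z q) = 1"
    and N: "0 < N"
begin

lemma circle_max_lagrange_ge_1: "p < N \<Longrightarrow> 1 \<le> circle_max (lagrange_basis z N p)"
  using circle_max_upper[OF unit, of p "lagrange_basis z N p"]
  by (simp add: poly_lagrange_basis_node[OF distinct])

lemma lagrange_max_ge: "p < N \<Longrightarrow> circle_max (lagrange_basis z N p) \<le> lagrange_max z N"
  unfolding lagrange_max_def by (rule Max_ge) auto

lemma lagrange_max_attained: "\<exists>p<N. lagrange_max z N = circle_max (lagrange_basis z N p)"
proof -
  have "lagrange_max z N \<in> (\<lambda>p. circle_max (lagrange_basis z N p)) ` {..<N}"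
    unfolding lagrange_max_def using N by (intro Max_in) auto
  then show ?thesis by auto
qed

lemma lagrange_max_ge_1: "1 \<le> lagrange_max z N"
  using circle_max_lagrange_ge_1[OF N] lagrange_max_ge[OF N] by linarith

text \<open>By the coefficient estimate, \<open>\<Sum>\<^sub>j |coeff L\<^sub>p j|\<^sup>2 \<le> N M\<close>.\<close>
lemma lagrange_coeffs_le:
  assumes p: "p < N"
  shows "(\<Sum>j<N. (cmod (coeff (lagrange_basis z N p) j))\<^sup>2) \<le> real N * lagrange_max z N"
proof -
  have "(\<Sum>j<N. (cmod (coeff (lagrange_basis z N p) j))\<^sup>2) \<le> (\<Sum>j<N. lagrange_max z N)"
    by (intro sum_mono order.trans[OF coeff_le_circle_max lagrange_max_ge[OF p]])
  then show ?thesis by simp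
qed

text \<open>Inverting \<open>W\<close> by the Lagrange coefficients gives \<open>\<parallel>f\<parallel>\<^sup>2 \<le> N\<^sup>2 M \<parallel>W f\<parallel>\<^sup>2\<close>.\<close>
lemma vec_norm2_le_moment_norm2:
  "vec_norm2 N f \<le> real N ^ 2 * lagrange_max z N * moment_norm2 z N f"
proof -
  define W where "W = (\<lambda>j. \<Sum>q<N. z q ^ j * f q)"
  have moment_W: "moment_norm2 z N f = (\<Sum>j<N. (cmod (W j))\<^sup>2)"
    by (simp add: moment_norm2_def W_def)
  have coord: "f p = (\<Sum>j<N. coeff (lagrange_basis z N p) j * W j)" if p: "p < N" for p
  proof -
    have "(\<Sum>j<N. coeff (lagrange_basis z N p) j * W j)
        = (\<Sum>q<N. f q * (\<Sum>j<N. coeff (lagrange_basis z N p) j * z q ^ j))"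
      unfolding W_def sum_distrib_left by (subst sum.swap) (simp add: mult_ac)
    also have "\<dots> = (\<Sum>q<N. f q * poly (lagrange_basis z N p) (z q))"
      by (simp add: poly_as_sum[OF degree_lagrange_basis[OF p]])
    also have "\<dots> = f p"
      using p by (simp add: poly_lagrange_basis_node[OF distinct p] if_distrib cong: if_cong)
    finally show ?thesis ..
  qed
  have "(cmod (f p))\<^sup>2 \<le> real N * lagrange_max z N * moment_norm2 z N f" if p: "p < N" for p
  proof -
    have "(cmod (f p))\<^sup>2
        \<le> (\<Sum>j<N. (cmod (coeff (lagrange_basis z N p) j))\<^sup>2) * moment_norm2 z N f"
      unfolding coord[OF p] moment_W by (rule cmod_sum_mult_sq_le)
    also have "\<dots> \<le> real N * lagrange_max z N * moment_norm2 z N f"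
      by (intro mult_right_mono lagrange_coeffs_le p) (simp add: moment_norm2_def sum_nonneg)
    finally show ?thesis .
  qed
  then have "vec_norm2 N f \<le> (\<Sum>p<N. real N * lagrange_max z N * moment_norm2 z N f)"
    unfolding vec_norm2_def by (intro sum_mono) simp
  then show ?thesis
    by (simp add: power2_eq_square)
qed

text \<open>Conversely, the test vector \<open>w = W\<^sup>-\<^sup>1 c\<close>, where \<open>c\<close> is the conjugated coefficient vector
  of a Lagrange polynomial \<open>L\<^sub>p\<close> of maximal size, satisfies \<open>M \<parallel>W w\<parallel>\<^sup>2 \<le> N \<parallel>w\<parallel>\<^sup>2\<close>.\<close>
lemma moment_norm2_test_vector:
  "\<exists>f. 0 < vec_norm2 N f \<and> lagrange_max z N * moment_norm2 z N f \<le> real N * vec_norm2 N f"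
proof -
  obtain p where p: "p < N" and M_eq: "lagrange_max z N = circle_max (lagrange_basis z N p)"
    using lagrange_max_attained by blast
  define c where "c = (\<lambda>q l. coeff (lagrange_basis z N q) l)"
  define s where "s = (\<Sum>l<N. (cmod (c p l))\<^sup>2)"
  define w where "w = (\<lambda>q. \<Sum>l<N. c q l * cnj (c p l))"
  have Ww: "(\<Sum>q<N. z q ^ j * w q) = cnj (c p j)" if j: "j < N" for j
  proof -
    have "(\<Sum>q<N. z q ^ j * w q) = (\<Sum>l<N. (\<Sum>q<N. z q ^ j * c q l) * cnj (c p l))"
      unfolding w_def sum_distrib_left sum_distrib_right by (subst sum.swap) (simp add: mult_ac)
    also have "\<dots> = (\<Sum>l<N. (if j = l then 1 else 0) * cnj (c p l))"
      unfolding c_def by (simp only: lagrange_coeff_inverse[OF distinct j])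
    also have "\<dots> = (\<Sum>l<N. if j = l then cnj (c p l) else 0)"
      by (intro sum.cong) auto
    also have "\<dots> = cnj (c p j)"
      using j by simp
    finally show ?thesis .
  qed
  have moment_w: "moment_norm2 z N w = s"
    unfolding moment_norm2_def s_def by (intro sum.cong) (simp_all add: Ww)
  have w_p: "w p = of_real s"
    unfolding w_def s_def by (simp add: complex_norm_square[unfolded of_real_power])
  have M_le: "lagrange_max z N \<le> real N * s"
    unfolding M_eq s_def c_def by (rule circle_max_le_coeffs[OF degree_lagrange_basis[OF p]])
  then have "0 < real N * s"
    using lagrange_max_ge_1 by linarith
  then have s_pos: "0 < s"
    by (simp add: zero_less_mult_iff)
  have s_le: "s\<^sup>2 \<le> vec_norm2 N w"
    using vec_norm2_ge_coord[OF p, of w] w_p s_pos by simp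
  have "lagrange_max z N * moment_norm2 z N w \<le> real N * s * s"
    unfolding moment_w using M_le s_pos by (simp add: mult_right_mono)
  also have "\<dots> \<le> real N * vec_norm2 N w"
    using s_le by (simp add: power2_eq_square mult.assoc mult_left_mono)
  finally have "lagrange_max z N * moment_norm2 z N w \<le> real N * vec_norm2 N w" .
  moreover have "0 < vec_norm2 N w"
    using s_le s_pos by (meson less_le_trans zero_less_power)
  ultimately show ?thesis by blast
qed

text \<open>Comparing
  leading coefficients in the interpolation of \<open>x\<^sup>N\<^sup>-\<^sup>1\<close> gives \<open>\<Sum>\<^sub>q z q\<^sup>N\<^sup>-\<^sup>1 / D\<^sub>q = 1\<close>.\<close>
lemma small_lagrange_denom: "\<exists>p<N. cmod (lagrange_denom z N p) \<le> real N"
proof (rule ccontr)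
  assume "\<not> (\<exists>p<N. cmod (lagrange_denom z N p) \<le> real N)"
  then have big: "real N < cmod (lagrange_denom z N q)" if "q < N" for q
    using that by auto
  have "(\<Sum>q<N. z q ^ (N - 1) * inverse (lagrange_denom z N q))
      = (\<Sum>q<N. z q ^ (N - 1) * coeff (lagrange_basis z N q) (N - 1))"
    by (intro sum.cong refl) (metis coeff_lagrange_basis_top lessThan_iff)
  also have "\<dots> = 1"
    using lagrange_coeff_inverse[OF distinct, of "N - 1" "N - 1"] N by simp
  finally have "1 = cmod (\<Sum>q<N. z q ^ (N - 1) * inverse (lagrange_denom z N q))"
    by simp
  also have "\<dots> \<le> (\<Sum>q<N. 1 / cmod (lagrange_denom z N q))"
    by (rule order.trans[OF norm_sum])
      (simp add: norm_mult norm_power unit norm_inverse divide_inverse)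
  also have "\<dots> < (\<Sum>q<N. 1 / real N)"
  proof (rule sum_strict_mono)
    fix q assume "q \<in> {..<N}"
    then have "real N < cmod (lagrange_denom z N q)"
      by (simp add: big)
    then show "1 / cmod (lagrange_denom z N q) < 1 / real N"
      using N by (simp add: frac_less2)
  qed (use N in auto)
  also have "\<dots> = 1"
    using N by simp
  finally show False by simp
qed

text \<open>For such a node \<open>p0\<close>, the product over the other nodes is at most \<open>N\<close> times \<open>L\<^sub>p\<^sub>0\<close>,
  and adding the factor \<open>|x - z p0| \<le> 2\<close> costs at most a factor \<open>4\<close> in the square.\<close>
lemma deleted_node_product_bounds:
  assumes p0: "p0 < N" and small: "cmod (lagrange_denom z N p0) \<le> real N"
  defines "Q0 \<equiv> (\<Prod>q \<in> {..<N} - {p0}. [:- z q, 1:])" and "Q \<equiv> (\<Prod>q \<in> {..<N}. [:- z q, 1:])"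
  shows "1 / lagrange_max z N \<le> real N ^ 2 / circle_max Q0"
    and "real N ^ 2 / circle_max Q0 \<le> 4 * real N ^ 2 / circle_max Q"
proof -
  have nonzero: "(\<Prod>q \<in> A. [:- z q, 1::complex:]) \<noteq> 0" if "finite A" for A
    using that by (simp add: prod_zero_iff)
  have Q0_pos: "0 < circle_max Q0" and Q_pos: "0 < circle_max Q"
    unfolding Q0_def Q_def by (simp_all add: circle_max_pos nonzero)
  have "circle_max Q0 \<le> real N ^ 2 * lagrange_max z N"
  proof (rule circle_max_least)
    fix x :: complex assume x: "cmod x = 1"
    have "poly Q0 x = lagrange_denom z N p0 * poly (lagrange_basis z N p0) x"
      using lagrange_denom_nonzero[OF distinct p0]
      by (simp add: Q0_def lagrange_basis_def poly_prod)
    then have "(cmod (poly Q0 x))\<^sup>2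
        = (cmod (lagrange_denom z N p0))\<^sup>2 * (cmod (poly (lagrange_basis z N p0) x))\<^sup>2"
      by (simp add: norm_mult power_mult_distrib)
    also have "\<dots> \<le> real N ^ 2 * lagrange_max z N"
      using small circle_max_upper[OF x] lagrange_max_ge[OF p0]
      by (intro mult_mono power_mono) (auto intro: order.trans)
    finally show "(cmod (poly Q0 x))\<^sup>2 \<le> real N ^ 2 * lagrange_max z N" .
  qed
  then show "1 / lagrange_max z N \<le> real N ^ 2 / circle_max Q0"
    using Q0_pos lagrange_max_ge_1 by (simp add: field_simps)
  have "circle_max Q \<le> 4 * circle_max Q0"
  proof (rule circle_max_least)
    fix x :: complex assume x: "cmod x = 1"
    have "Q = [:- z p0, 1:] * Q0"
      unfolding Q_def Q0_def using p0 by (subst prod.remove[of _ p0]) auto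
    then have "poly Q x = (x - z p0) * poly Q0 x"
      by (simp only: poly_mult) (simp add: algebra_simps)
    then have "(cmod (poly Q x))\<^sup>2 = (cmod (x - z p0))\<^sup>2 * (cmod (poly Q0 x))\<^sup>2"
      by (simp add: norm_mult power_mult_distrib)
    also have "\<dots> \<le> 2\<^sup>2 * circle_max Q0"
      using norm_triangle_ineq4[of x "z p0"] x unit[OF p0] circle_max_upper[OF x, of Q0]
      by (intro mult_mono power_mono) auto
    finally show "(cmod (poly Q x))\<^sup>2 \<le> 4 * circle_max Q0"
      by simp
  qed
  then have "circle_max Q * real N ^ 2 \<le> 4 * circle_max Q0 * real N ^ 2"
    by (simp add: mult_right_mono)
  then show "real N ^ 2 / circle_max Q0 \<le> 4 * real N ^ 2 / circle_max Q"
    using Q0_pos Q_pos by (simp add: field_simps)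
qed

end

section \<open>Eigenvalue bounds for unit-circle Vandermonde matrices\<close>

theorem smallest_eigenvalue_bounds:
  fixes V :: "complex mat" and z :: "nat \<Rightarrow> complex"
  assumes V: "V \<in> carrier_mat N N" and N: "0 < N"
    and distinct: "inj_on z {..<N}" and unit: "\<And>q. q < N \<Longrightarrow> cmod (z q) = 1"
    and image: "\<And>f. image_norm2 V N f = moment_norm2 z N f / real N"
  defines "lam \<equiv> smallest_eigenvalue (mat_adjoint V * V)" and "M \<equiv> lagrange_max z N"
  shows "1 / (real N ^ 3 * M) \<le> lam" and "lam \<le> 1 / M"
proof -
  have M: "1 \<le> M"
    unfolding M_def by (rule lagrange_max_ge_1[OF distinct unit N])
  obtain f where f: "0 < vec_norm2 N f" "lam * vec_norm2 N f = moment_norm2 z N f / real N"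
    using smallest_eigenvalue_rayleigh(2)[OF V N] unfolding lam_def image by blast
  have "vec_norm2 N f \<le> real N ^ 2 * M * moment_norm2 z N f"
    unfolding M_def by (rule vec_norm2_le_moment_norm2[OF distinct unit N])
  also have "\<dots> = (real N ^ 3 * M * lam) * vec_norm2 N f"
    using f(2) N by (simp add: field_simps power_numeral_reduce)
  finally have "1 \<le> real N ^ 3 * M * lam"
    using f(1) by simp
  then show "1 / (real N ^ 3 * M) \<le> lam"
    using N M by (simp add: field_simps)
  obtain w where w: "0 < vec_norm2 N w" "M * moment_norm2 z N w \<le> real N * vec_norm2 N w"
    using moment_norm2_test_vector[OF distinct unit N] unfolding M_def by blast
  have "lam * vec_norm2 N w \<le> moment_norm2 z N w / real N"
    using smallest_eigenvalue_rayleigh(1)[OF V N] unfolding lam_def image by blast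
  then have "M * (lam * vec_norm2 N w) \<le> M * (moment_norm2 z N w / real N)"
    using M by (intro mult_left_mono) auto
  also have "\<dots> \<le> vec_norm2 N w"
    using w(2) N by (simp add: field_simps)
  finally have "M * lam \<le> 1"
    using w(1) by (simp add: mult.assoc[symmetric])
  then show "lam \<le> 1 / M"
    using M by (simp add: field_simps)
qed

section \<open>The Vandermonde matrix of distinct phases\<close>

lemma norm_node [simp]: "cmod (node \<theta> q) = 1"
  by (simp add: node_def)

lemma inj_on_node:
  assumes inj: "inj_on \<theta> {..<N}" and range: "\<And>q. q < N \<Longrightarrow> 0 \<le> \<theta> q \<and> \<theta> q < 1"
  shows "inj_on (node \<theta>) {..<N}"
proof (rule inj_onI)
  fix q r assume q: "q \<in> {..<N}" and r: "r \<in> {..<N}" and eq: "node \<theta> q = node \<theta> r"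
  from eq obtain k :: int where
    "2 * pi * \<i> * complex_of_real (\<theta> q) = 2 * pi * \<i> * complex_of_real (\<theta> r) + (of_int (2 * k) * pi) * \<i>"
    unfolding node_def exp_eq by blast
  then have "2 * pi * \<theta> q = 2 * pi * (\<theta> r + k)"
    by (simp add: complex_eq_iff algebra_simps)
  then have "\<theta> q = \<theta> r + k"
    by simp
  moreover have "\<bar>\<theta> q - \<theta> r\<bar> < 1"
    using range[of q] range[of r] q r by auto
  ultimately have "\<theta> q = \<theta> r"
    by simp
  then show "q = r"
    using inj q r by (auto dest: inj_onD)
qed

lemma vandermonde_carrier: "vandermonde N \<theta> \<in> carrier_mat N N"
  by (simp add: vandermonde_def)

lemma image_norm2_vandermonde:
  assumes N: "0 < N"
  shows "image_norm2 (vandermonde N \<theta>) N f = moment_norm2 (node \<theta>) N f / real N"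
proof -
  have entry: "vandermonde N \<theta> $$ (j, q) = of_real (1 / sqrt (real N)) * node \<theta> q ^ j"
    if "j < N" "q < N" for j q
    using that unfolding vandermonde_def node_def by (simp add: exp_of_nat_mult[symmetric] mult_ac)
  have "image_norm2 (vandermonde N \<theta>) N f
      = (\<Sum>j<N. (cmod (of_real (1 / sqrt (real N)) * (\<Sum>q<N. node \<theta> q ^ j * f q)))\<^sup>2)"
    unfolding image_norm2_def by (intro sum.cong refl) (simp add: entry sum_distrib_left mult.assoc)
  also have "\<dots> = moment_norm2 (node \<theta>) N f / real N"
  proof -
    have scale: "(cmod (of_real (1 / sqrt (real N)) * S))\<^sup>2 = (cmod S)\<^sup>2 / real N" for S :: complex
      using N by (simp add: norm_divide power_divide)
    show ?thesis
      unfolding scale moment_norm2_def by (simp add: sum_divide_distrib)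
  qed
  finally show ?thesis .
qed

lemma cmod_Tpoly: "cmod (Tpoly N \<theta> p x) = cmod (poly (lagrange_basis (node \<theta>) N p) x)"
  unfolding Tpoly_def poly_lagrange_basis lagrange_denom_def
  by (simp add: norm_divide prod_norm[symmetric] prod_dividef)

lemma circle_max_Tpoly:
  "(SUP z \<in> {z. cmod z = 1}. (cmod (Tpoly N \<theta> p z))\<^sup>2) = circle_max (lagrange_basis (node \<theta>) N p)"
  unfolding circle_max_def cmod_Tpoly ..

theorem mainTheorem9:
  fixes N :: nat and \<theta> :: "nat \<Rightarrow> real"
  assumes "N \<ge> 1"
    and "inj_on \<theta> {..<N}"
    and "\<And>q. q < N \<Longrightarrow> 0 \<le> \<theta> q \<and> \<theta> q < 1"
  defines "lam1 \<equiv> smallest_eigenvalue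
              (mat_adjoint (vandermonde N \<theta>) * vandermonde N \<theta>)"
    and "M \<equiv> Max ((\<lambda>p. SUP z \<in> {z. cmod z = 1}. (cmod (Tpoly N \<theta> p z))\<^sup>2) ` {..<N})"
  shows "(1 / (real N ^ 3 * M) \<le> lam1 \<and> lam1 \<le> 1 / M)
     \<and> (\<exists>p0 < N. (\<Prod>q \<in> {..<N} - {p0}. cmod (node \<theta> p0 - node \<theta> q)) \<le> real N)
     \<and> (\<forall>p0 < N. (\<Prod>q \<in> {..<N} - {p0}. cmod (node \<theta> p0 - node \<theta> q)) \<le> real N \<longrightarrow>
          lam1 \<le> real N ^ 2 / (SUP z \<in> {z. cmod z = 1}. (\<Prod>q \<in> {..<N} - {p0}. cmod (z - node \<theta> q))\<^sup>2)
        \<and> real N ^ 2 / (SUP z \<in> {z. cmod z = 1}. (\<Prod>q \<in> {..<N} - {p0}. cmod (z - node \<theta> q))\<^sup>2)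
          \<le> 4 * real N ^ 2 / (SUP z \<in> {z. cmod z = 1}. (\<Prod>q \<in> {..<N}. cmod (z - node \<theta> q))\<^sup>2))"
proof -
  have N: "0 < N"
    using assms(1) by simp
  note distinct = inj_on_node[OF assms(2,3)]
  have unit: "\<And>q. q < N \<Longrightarrow> cmod (node \<theta> q) = 1"
    by simp
  have M_eq: "M = lagrange_max (node \<theta>) N"
    unfolding M_def lagrange_max_def circle_max_Tpoly ..
  have denom: "(\<Prod>q \<in> {..<N} - {p}. cmod (node \<theta> p - node \<theta> q)) = cmod (lagrange_denom (node \<theta>) N p)"
    for p by (simp add: lagrange_denom_def prod_norm)
  note bounds = smallest_eigenvalue_bounds[OF vandermonde_carrier N distinct unit
      image_norm2_vandermonde[OF N], folded lam1_def M_eq]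
  note products = deleted_node_product_bounds[OF distinct unit N,
      unfolded circle_max_node_product, folded M_eq]
  show ?thesis
    unfolding denom using bounds products small_lagrange_denom[OF distinct unit N]
    by (meson order.trans)
qed

end
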